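(* (i) For every constant $C > e^2$, $g(r^{(\log C)/2}, r^{r/(2C)}) \le r$ for all sufficiently large $r$. (ii) For every constant $\varepsilon>0$, $g(2^{\varepsilon \log^2 r}, 2^{r^{1-\varepsilon}}) \le r$ for all sufficiently large $r$. (iii) There exists a positive constant $c$ such that $g(cr^2, r^{r^2/2}/e^{r^2}) \le r$ for all sufficiently large $r$.
   Context: All logarithms are base 2; non-integer arguments are understood to be rounded to integers (the paper omits floor and ceiling signs). For positive integers $m,n$, the grid graph $\Gamma_{m,n}$ is the graph on vertex set $[m]\times[n]$ in which distinct vertices $(i,j),(i',j')$ are adjacent iff $i=i'$ or $j=j'$. A rectangle is the induced subgraph on $\{(i,j),(i',j),(i,j'),(i',j')\}$ with $i<i'$, $j<j'$; in an edge coloring it is alternating if $\{(i,j),(i',j)\}$ and $\{(i,j'),(i',j')\}$ have the same color and $\{(i,j),(i,j')\}$ and $\{(i',j),(i',j')\}$ have the same color. $g(m,n)$ is the minimum integer $r$ for which there exists an edge coloring of $\Gamma_{m,n}$ with $r$ colors containing no alternating rectangle. *)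

theory Defs
  imports Complex_Main
begin

definition grid_adj :: "nat \<Rightarrow> nat \<Rightarrow> nat \<times> nat \<Rightarrow> nat \<times> nat \<Rightarrow> bool" where
  "grid_adj m n u v \<longleftrightarrow> u \<in> {1..m} \<times> {1..n} \<and> v \<in> {1..m} \<times> {1..n} \<and> u \<noteq> v
     \<and> (fst u = fst v \<or> snd u = snd v)"

definition grid_edges :: "nat \<Rightarrow> nat \<Rightarrow> (nat \<times> nat) set set" where
  "grid_edges m n = {{u, v} | u v. grid_adj m n u v}"

definition has_alternating_rectangle :: "((nat \<times> nat) set \<Rightarrow> nat) \<Rightarrow> nat \<Rightarrow> nat \<Rightarrow> bool" where
  "has_alternating_rectangle c m n \<longleftrightarrow>
     (\<exists>i i' j j'. 1 \<le> i \<and> i < i' \<and> i' \<le> m \<and> 1 \<le> j \<and> j < j' \<and> j' \<le> n \<and>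
        c {(i, j), (i', j)} = c {(i, j'), (i', j')} \<and>
        c {(i, j), (i, j')} = c {(i', j), (i', j')})"

definition good_coloring :: "nat \<Rightarrow> nat \<Rightarrow> nat \<Rightarrow> ((nat \<times> nat) set \<Rightarrow> nat) \<Rightarrow> bool" where
  "good_coloring m n r c \<longleftrightarrow> (\<forall>e \<in> grid_edges m n. c e < r) \<and> \<not> has_alternating_rectangle c m n"

definition g :: "nat \<Rightarrow> nat \<Rightarrow> nat" where
  "g m n = (LEAST r. \<exists>c. good_coloring m n r c)"

end

(*
  Each bound comes from a colouring that gives the edge {(i,j),(i,j')} (j < j') a colour P i j j'
  and the edge {(i,j),(i',j)} (i < i') a colour Q i i' j. A rectangle is alternating exactly when
  P i j j' = P i' j j' and Q i i' j = Q i i' j', so it suffices that for every pair of rows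
  (or of columns) the graph of conflicting pairs on the other coordinate is properly r-colourable.

  For (i) and (ii), row i carries a word of length L = log n over r letters, and the edge between
  columns j and j' gets the letter at the first binary digit in which j - 1 and j' - 1 differ.
  If two words agree in at most log r positions, the binary digits at those positions r-colour
  the conflict graph. A greedy (Gilbert-Varshamov) choice of m such words succeeds as soon as
  m (L choose log r) r^(-log r) < 1.

  For (iii), column j carries an r-colouring of the complete graph on the m rows. If no two of
  these agree on a subgraph of minimum degree r, every conflict graph is (r - 1)-degenerate and
  hence r-colourable. Counting the colourings that agree densely with a fixed one shows that n of
  them can be chosen greedily when n is about r^(r^2/2) / e^(r^2) and m = e^(-4) r^2.

  In all regimes binomial coefficients are estimated by (e n / k)^k.
*)

theory Submission
  imports Defs "HOL-Library.FuncSet" "HOL-Library.Discrete_Functions" "HOL-Real_Asymp.Real_Asymp"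
begin

section \<open>Colourings assembled from row and column data\<close>

definition colorable :: "nat \<Rightarrow> 'a set \<Rightarrow> ('a \<Rightarrow> 'a \<Rightarrow> bool) \<Rightarrow> bool" where
  "colorable r V adj \<longleftrightarrow> (\<exists>q. (\<forall>v\<in>V. q v < r) \<and> (\<forall>u\<in>V. \<forall>v\<in>V. adj u v \<longrightarrow> q u \<noteq> q v))"

definition split_coloring ::
    "(nat \<Rightarrow> nat \<Rightarrow> nat \<Rightarrow> nat) \<Rightarrow> (nat \<Rightarrow> nat \<Rightarrow> nat \<Rightarrow> nat) \<Rightarrow> (nat \<times> nat) set \<Rightarrow> nat" where
  "split_coloring P Q e =
     (if card (fst ` e) = 1 then P (the_elem (fst ` e)) (Min (snd ` e)) (Max (snd ` e))
      else Q (Min (fst ` e)) (Max (fst ` e)) (the_elem (snd ` e)))"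

lemma split_coloring_same_fst: "j < j' \<Longrightarrow> split_coloring P Q {(i, j), (i, j')} = P i j j'"
  unfolding split_coloring_def by (simp add: the_elem_def)

lemma split_coloring_same_snd: "i < i' \<Longrightarrow> split_coloring P Q {(i, j), (i', j)} = Q i i' j"
  unfolding split_coloring_def by (simp add: the_elem_def)

lemma grid_edgesE:
  assumes "e \<in> grid_edges m n"
  obtains i j j' where "i \<in> {1..m}" "1 \<le> j" "j < j'" "j' \<le> n" "e = {(i, j), (i, j')}"
    | i i' j where "1 \<le> i" "i < i'" "i' \<le> m" "j \<in> {1..n}" "e = {(i, j), (i', j)}"
proof -
  obtain a b a' b' where ab: "e = {(a, b), (a', b')}" "grid_adj m n (a, b) (a', b')"
    using assms unfolding grid_edges_def by auto
  then have range: "a \<in> {1..m}" "a' \<in> {1..m}" "b \<in> {1..n}" "b' \<in> {1..n}"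
    and "(a = a' \<and> b \<noteq> b') \<or> (b = b' \<and> a \<noteq> a')"
    unfolding grid_adj_def by auto
  then consider "a = a'" "b < b'" | "a = a'" "b' < b" | "b = b'" "a < a'" | "b = b'" "a' < a"
    by linarith
  then show thesis
  proof cases
    case 1
    then show thesis using that(1)[of a b b'] range unfolding ab(1) by simp
  next
    case 2
    then show thesis using that(1)[of a b' b] range unfolding ab(1) by (simp add: insert_commute)
  next
    case 3
    then show thesis using that(2)[of a a' b] range unfolding ab(1) by simp
  next
    case 4
    then show thesis using that(2)[of a' a b] range unfolding ab(1) by (simp add: insert_commute)
  qed
qed

lemma g_le_split_coloring:
  assumes P: "\<And>i j j'. i \<in> {1..m} \<Longrightarrow> 1 \<le> j \<Longrightarrow> j < j' \<Longrightarrow> j' \<le> n \<Longrightarrow> P i j j' < r"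
    and Q: "\<And>i i' j. 1 \<le> i \<Longrightarrow> i < i' \<Longrightarrow> i' \<le> m \<Longrightarrow> j \<in> {1..n} \<Longrightarrow> Q i i' j < r"
    and no_alternating: "\<And>i i' j j'. 1 \<le> i \<Longrightarrow> i < i' \<Longrightarrow> i' \<le> m \<Longrightarrow> 1 \<le> j \<Longrightarrow> j < j' \<Longrightarrow> j' \<le> n \<Longrightarrow>
       P i j j' = P i' j j' \<Longrightarrow> Q i i' j \<noteq> Q i i' j'"
  shows "g m n \<le> r"
proof -
  have "good_coloring m n r (split_coloring P Q)"
    unfolding good_coloring_def has_alternating_rectangle_def
  proof (intro conjI ballI notI)
    fix e assume "e \<in> grid_edges m n"
    then show "split_coloring P Q e < r"
    proof (cases rule: grid_edgesE)
      case (1 i j j')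
      then show ?thesis using P[of i j j'] by (simp add: split_coloring_same_fst)
    next
      case (2 i i' j)
      then show ?thesis using Q[of i i' j] by (simp add: split_coloring_same_snd)
    qed
  next
    assume "\<exists>i i' j j'. 1 \<le> i \<and> i < i' \<and> i' \<le> m \<and> 1 \<le> j \<and> j < j' \<and> j' \<le> n \<and>
      split_coloring P Q {(i, j), (i', j)} = split_coloring P Q {(i, j'), (i', j')} \<and>
      split_coloring P Q {(i, j), (i, j')} = split_coloring P Q {(i', j), (i', j')}"
    then obtain i i' j j' where "1 \<le> i" "i < i'" "i' \<le> m" "1 \<le> j" "j < j'" "j' \<le> n"
      "Q i i' j = Q i i' j'" "P i j j' = P i' j j'"
      by (auto simp: split_coloring_same_fst split_coloring_same_snd)
    then show False using no_alternating by blast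
  qed
  then show ?thesis
    unfolding g_def by (rule Least_le[where P = "\<lambda>r. \<exists>c. good_coloring m n r c", OF exI])
qed

lemma g_le_of_row_colors:
  assumes X: "\<And>i j j'. i \<in> {1..m} \<Longrightarrow> 1 \<le> j \<Longrightarrow> j < j' \<Longrightarrow> j' \<le> n \<Longrightarrow> X i j j' < r"
    and colorable: "\<And>i i'. 1 \<le> i \<Longrightarrow> i < i' \<Longrightarrow> i' \<le> m \<Longrightarrow>
       colorable r {1..n} (\<lambda>j j'. j < j' \<and> X i j j' = X i' j j')"
  shows "g m n \<le> r"
proof -
  obtain Q where Q: "\<forall>i i'. 1 \<le> i \<and> i < i' \<and> i' \<le> m \<longrightarrow> (\<forall>j\<in>{1..n}. Q i i' j < r) \<and>
      (\<forall>j\<in>{1..n}. \<forall>j'\<in>{1..n}. j < j' \<and> X i j j' = X i' j j' \<longrightarrow> Q i i' j \<noteq> Q i i' j')"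
    using colorable unfolding colorable_def by metis
  show ?thesis
  proof (rule g_le_split_coloring[where P = X and Q = Q])
    fix i i' j j'
    assume "1 \<le> i" "i < i'" "i' \<le> m" "1 \<le> j" "j < j'" "j' \<le> n" "X i j j' = X i' j j'"
    then show "Q i i' j \<noteq> Q i i' j'" using Q by simp
  qed (use Q X in simp_all)
qed

lemma g_le_of_column_colors:
  assumes Y: "\<And>j i i'. j \<in> {1..n} \<Longrightarrow> 1 \<le> i \<Longrightarrow> i < i' \<Longrightarrow> i' \<le> m \<Longrightarrow> Y j i i' < r"
    and colorable: "\<And>j j'. 1 \<le> j \<Longrightarrow> j < j' \<Longrightarrow> j' \<le> n \<Longrightarrow>
       colorable r {1..m} (\<lambda>i i'. i < i' \<and> Y j i i' = Y j' i i')"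
  shows "g m n \<le> r"
proof -
  obtain q where q: "\<forall>j j'. 1 \<le> j \<and> j < j' \<and> j' \<le> n \<longrightarrow> (\<forall>i\<in>{1..m}. q j j' i < r) \<and>
      (\<forall>i\<in>{1..m}. \<forall>i'\<in>{1..m}. i < i' \<and> Y j i i' = Y j' i i' \<longrightarrow> q j j' i \<noteq> q j j' i')"
    using colorable unfolding colorable_def by metis
  show ?thesis
  proof (rule g_le_split_coloring[where P = "\<lambda>i j j'. q j j' i" and Q = "\<lambda>i i' j. Y j i i'"])
    fix i i' j j'
    assume "1 \<le> i" "i < i'" "i' \<le> m" "1 \<le> j" "j < j'" "j' \<le> n" "q j j' i = q j j' i'"
    then show "Y j i i' \<noteq> Y j' i i'" using q by auto
  qed (use q Y in simp_all)
qed

lemma colorable_mono: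
  "colorable r V adj \<Longrightarrow> (\<And>u v. u \<in> V \<Longrightarrow> v \<in> V \<Longrightarrow> adj' u v \<Longrightarrow> adj u v) \<Longrightarrow> colorable r V adj'"
  unfolding colorable_def by blast

lemma colorable_if_separated_by_small_image:
  assumes "finite (\<phi> ` V)" "card (\<phi> ` V) \<le> r"
    and separates: "\<And>u v. u \<in> V \<Longrightarrow> v \<in> V \<Longrightarrow> adj u v \<Longrightarrow> \<phi> u \<noteq> \<phi> v"
  shows "colorable r V adj"
proof -
  obtain h where h: "bij_betw h (\<phi> ` V) {0..<card (\<phi> ` V)}"
    using ex_bij_betw_finite_nat[OF assms(1)] by blast
  have "\<forall>v\<in>V. h (\<phi> v) < r"
    using bij_betwE[OF h] assms(2) by fastforce
  moreover have "\<forall>u\<in>V. \<forall>v\<in>V. adj u v \<longrightarrow> h (\<phi> u) \<noteq> h (\<phi> v)"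
    using bij_betw_imp_inj_on[OF h] separates by (auto dest: inj_onD)
  ultimately show ?thesis
    unfolding colorable_def by (intro exI[of _ "h \<circ> \<phi>"]) simp
qed

section \<open>Colourings from codes with few agreements\<close>

definition first_diff_bit :: "nat \<Rightarrow> nat \<Rightarrow> nat" where
  "first_diff_bit a b = (LEAST l. bit a l \<noteq> bit b l)"

lemma bit_first_diff_bit: "a \<noteq> b \<Longrightarrow> bit a (first_diff_bit a b) \<noteq> bit b (first_diff_bit a b)"
  unfolding first_diff_bit_def by (rule LeastI_ex) (metis bit_eq_iff)

lemma not_bit_if_less_exp: "(a::nat) < 2 ^ L \<Longrightarrow> L \<le> l \<Longrightarrow> \<not> bit a l"
proof -
  assume "a < 2 ^ L" "L \<le> l"
  then have "a < 2 ^ l" by (meson order_less_le_trans one_le_numeral power_increasing)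
  then show ?thesis by (simp add: bit_iff_odd)
qed

lemma first_diff_bit_less: "a \<noteq> b \<Longrightarrow> (a::nat) < 2 ^ L \<Longrightarrow> b < 2 ^ L \<Longrightarrow> first_diff_bit a b < L"
  using bit_first_diff_bit[of a b] not_bit_if_less_exp[of a L] not_bit_if_less_exp[of b L]
  by (meson not_le)

lemma g_le_of_code:
  assumes \<sigma>: "\<And>i l. i \<in> {1..m} \<Longrightarrow> l < L \<Longrightarrow> \<sigma> i l < r"
    and agreements: "\<And>i i'. 1 \<le> i \<Longrightarrow> i < i' \<Longrightarrow> i' \<le> m \<Longrightarrow> card {l. l < L \<and> \<sigma> i l = \<sigma> i' l} \<le> K"
    and K: "2 ^ K \<le> r" and n: "n \<le> 2 ^ L"
  shows "g m n \<le> r"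
proof -
  have diff_less: "first_diff_bit (j - 1) (j' - 1) < L" if "1 \<le> j" "j < j'" "j' \<le> n" for j j'
    using that n by (intro first_diff_bit_less) auto
  show ?thesis
  proof (rule g_le_of_row_colors[where X = "\<lambda>i j j'. \<sigma> i (first_diff_bit (j - 1) (j' - 1))"])
    fix i j j' assume "i \<in> {1..m}" "1 \<le> j" "j < j'" "j' \<le> n"
    then show "\<sigma> i (first_diff_bit (j - 1) (j' - 1)) < r" using \<sigma> diff_less by blast
  next
    fix i i' assume ii': "1 \<le> i" "i < i'" "i' \<le> m"
    define S where "S = {l. l < L \<and> \<sigma> i l = \<sigma> i' l}"
    define \<phi> where "\<phi> j = {l \<in> S. bit (j - 1) l}" for j :: nat
    have "finite S" unfolding S_def by auto
    have image: "\<phi> ` {1..n} \<subseteq> Pow S" unfolding \<phi>_def by auto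
    then have "finite (\<phi> ` {1..n})"
      using \<open>finite S\<close> by (meson finite_Pow_iff finite_subset)
    moreover have "card (\<phi> ` {1..n}) \<le> 2 ^ card S"
      using image \<open>finite S\<close> by (metis card_Pow card_mono finite_Pow_iff)
    moreover have "2 ^ card S \<le> r"
      using agreements[OF ii'] K unfolding S_def[symmetric]
      by (meson order_trans one_le_numeral power_increasing)
    ultimately show "colorable r {1..n} (\<lambda>j j'. j < j' \<and>
        \<sigma> i (first_diff_bit (j - 1) (j' - 1)) = \<sigma> i' (first_diff_bit (j - 1) (j' - 1)))"
    proof (intro colorable_if_separated_by_small_image[where \<phi> = \<phi>])
      fix j j' assume "j \<in> {1..n}" "j' \<in> {1..n}"
        "j < j' \<and> \<sigma> i (first_diff_bit (j - 1) (j' - 1)) = \<sigma> i' (first_diff_bit (j - 1) (j' - 1))"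
      then have "first_diff_bit (j - 1) (j' - 1) \<in> S" and "j - 1 \<noteq> j' - 1"
        using diff_less unfolding S_def by auto
      then show "\<phi> j \<noteq> \<phi> j'"
        using bit_first_diff_bit unfolding \<phi>_def by blast
    qed simp_all
  qed
qed

lemma greedy_pairwise_good:
  assumes fin: "finite U" and sym: "\<And>f h. bad f h \<Longrightarrow> bad h f"
    and few_bad: "\<And>f. f \<in> U \<Longrightarrow> card {h \<in> U. bad f h} \<le> b"
    and "m * b < card U"
  shows "\<exists>\<sigma>. (\<forall>i<m. \<sigma> i \<in> U) \<and> (\<forall>i<m. \<forall>i'<m. i \<noteq> i' \<longrightarrow> \<not> bad (\<sigma> i) (\<sigma> i'))"
  using \<open>m * b < card U\<close>
proof (induction m)
  case 0
  then show ?case by simp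
next
  case (Suc m)
  then have "m * b < card U" by simp
  with Suc.IH obtain \<sigma> where \<sigma>: "\<forall>i<m. \<sigma> i \<in> U" "\<forall>i<m. \<forall>i'<m. i \<noteq> i' \<longrightarrow> \<not> bad (\<sigma> i) (\<sigma> i')"
    by blast
  define W where "W = (\<Union>i<m. {h \<in> U. bad (\<sigma> i) h})"
  have "card W \<le> (\<Sum>i<m. card {h \<in> U. bad (\<sigma> i) h})"
    unfolding W_def by (rule card_UN_le) simp
  also have "\<dots> \<le> (\<Sum>i<m. b)" using \<sigma>(1) few_bad by (intro sum_mono) auto
  finally have "card W < card U" using Suc.prems by simp
  moreover have "W \<subseteq> U" unfolding W_def by auto
  ultimately have "\<not> U \<subseteq> W" by (metis subset_antisym less_irrefl)
  then obtain h where h: "h \<in> U" "h \<notin> W" by blast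
  have "\<forall>i<Suc m. \<forall>i'<Suc m. i \<noteq> i' \<longrightarrow> \<not> bad ((\<sigma>(m := h)) i) ((\<sigma>(m := h)) i')"
    using \<sigma> h unfolding W_def by (auto simp: less_Suc_eq dest: sym)
  moreover have "\<forall>i<Suc m. (\<sigma>(m := h)) i \<in> U" using \<sigma>(1) h(1) by (simp add: less_Suc_eq)
  ultimately show ?case by blast
qed

lemma finite_subsets_of_card: "finite A \<Longrightarrow> finite {T. T \<subseteq> A \<and> card T = k}"
  by (rule finite_subset[of _ "Pow A"]) auto

lemma card_PiE_agreeing:
  assumes "finite D" "T \<subseteq> D" "\<forall>l\<in>T. f l < r"
  shows "card {h \<in> PiE D (\<lambda>_. {0..<r}). \<forall>l\<in>T. h l = f l} = r ^ (card D - card T)"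
proof -
  have "{h \<in> PiE D (\<lambda>_. {0..<r}). \<forall>l\<in>T. h l = f l} = PiE D (\<lambda>l. if l \<in> T then {f l} else {0..<r})"
    using assms by (auto simp: PiE_iff extensional_def split: if_splits)
  then have "card {h \<in> PiE D (\<lambda>_. {0..<r}). \<forall>l\<in>T. h l = f l} = (\<Prod>l\<in>D. if l \<in> T then 1 else r)"
    using assms by (simp add: card_PiE if_distrib cong: if_cong)
  also have "\<dots> = r ^ card (D - T)"
    using assms by (simp add: prod.If_cases Diff_eq)
  also have "card (D - T) = card D - card T"
    using assms by (simp add: card_Diff_subset finite_subset)
  finally show ?thesis .
qed

lemma card_PiE_agreeing_somewhere:
  assumes D: "finite D" and I: "finite I" and T: "\<And>x. x \<in> I \<Longrightarrow> T x \<subseteq> D"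
    and f: "f \<in> PiE D (\<lambda>_. {0..<r})"
  shows "card {h \<in> PiE D (\<lambda>_. {0..<r}). \<exists>x\<in>I. \<forall>l\<in>T x. h l = f l} \<le> (\<Sum>x\<in>I. r ^ (card D - card (T x)))"
proof -
  have "{h \<in> PiE D (\<lambda>_. {0..<r}). \<exists>x\<in>I. \<forall>l\<in>T x. h l = f l} =
      (\<Union>x\<in>I. {h \<in> PiE D (\<lambda>_. {0..<r}). \<forall>l\<in>T x. h l = f l})"
    by blast
  also have "card \<dots> \<le> (\<Sum>x\<in>I. card {h \<in> PiE D (\<lambda>_. {0..<r}). \<forall>l\<in>T x. h l = f l})"
    using I by (rule card_UN_le)
  also have "\<dots> = (\<Sum>x\<in>I. r ^ (card D - card (T x)))"
  proof (rule sum.cong[OF refl])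
    fix x assume "x \<in> I"
    moreover from this have "\<forall>l\<in>T x. f l < r" using T f by (auto simp: PiE_iff)
    ultimately show "card {h \<in> PiE D (\<lambda>_. {0..<r}). \<forall>l\<in>T x. h l = f l} = r ^ (card D - card (T x))"
      using card_PiE_agreeing[OF D T] by blast
  qed
  finally show ?thesis .
qed

lemma card_words_with_many_agreements:
  assumes f: "f \<in> PiE {0..<L} (\<lambda>_. {0..<r})"
  shows "card {h \<in> PiE {0..<L} (\<lambda>_. {0..<r}). K < card {l. l < L \<and> f l = h l}}
    \<le> (L choose Suc K) * r ^ (L - Suc K)"
proof -
  let ?U = "PiE {0..<L} (\<lambda>_. {0..<r})"
  let ?Ts = "{T. T \<subseteq> {0..<L} \<and> card T = Suc K}"
  have "{h \<in> ?U. K < card {l. l < L \<and> f l = h l}} \<subseteq> {h \<in> ?U. \<exists>T\<in>?Ts. \<forall>l\<in>T. h l = f l}"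
  proof (rule subsetI)
    fix h assume h: "h \<in> {h \<in> ?U. K < card {l. l < L \<and> f l = h l}}"
    then have "Suc K \<le> card {l. l < L \<and> f l = h l}" by simp
    then obtain T where "T \<subseteq> {l. l < L \<and> f l = h l}" "card T = Suc K"
      by (rule obtain_subset_with_card_n)
    then have "T \<in> ?Ts" "\<forall>l\<in>T. h l = f l" by auto
    then show "h \<in> {h \<in> ?U. \<exists>T\<in>?Ts. \<forall>l\<in>T. h l = f l}" using h by blast
  qed
  moreover have "finite {h \<in> ?U. \<exists>T\<in>?Ts. \<forall>l\<in>T. h l = f l}"
    by (rule finite_subset[of _ ?U]) (auto simp: finite_PiE)
  ultimately have "card {h \<in> ?U. K < card {l. l < L \<and> f l = h l}} \<le> card {h \<in> ?U. \<exists>T\<in>?Ts. \<forall>l\<in>T. h l = f l}"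
    by (rule card_mono[rotated])
  also have "\<dots> \<le> (\<Sum>T\<in>?Ts. r ^ (card {0..<L} - card T))"
  proof (rule card_PiE_agreeing_somewhere[OF _ _ _ f])
    show "finite ?Ts" by (rule finite_subsets_of_card) simp
  qed auto
  also have "\<dots> = (\<Sum>T\<in>?Ts. r ^ (L - Suc K))" by (intro sum.cong) auto
  also have "\<dots> = (L choose Suc K) * r ^ (L - Suc K)"
    using n_subsets[of "{0..<L}" "Suc K"] by simp
  finally show ?thesis .
qed

lemma g_le_of_code_count:
  assumes count: "m * ((L choose Suc K) * r ^ (L - Suc K)) < r ^ L"
    and K: "2 ^ K \<le> r" and n: "n \<le> 2 ^ L"
  shows "g m n \<le> r"
proof -
  let ?U = "PiE {0..<L} (\<lambda>_. {0..<r})"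
  let ?close = "\<lambda>f h. K < card {l. l < L \<and> f l = h l}"
  have close_sym: "?close h f" if "?close f h" for f h :: "nat \<Rightarrow> nat"
    using that by (simp add: eq_commute)
  have fin: "finite ?U" by (simp add: finite_PiE)
  have "m * ((L choose Suc K) * r ^ (L - Suc K)) < card ?U"
    using count by (simp add: card_PiE)
  then obtain \<sigma> where \<sigma>: "\<forall>i<m. \<sigma> i \<in> ?U" "\<forall>i<m. \<forall>i'<m. i \<noteq> i' \<longrightarrow> \<not> ?close (\<sigma> i) (\<sigma> i')"
    using greedy_pairwise_good[where U = ?U and bad = ?close, OF fin close_sym card_words_with_many_agreements]
    by blast
  show ?thesis
  proof (rule g_le_of_code[where \<sigma> = "\<lambda>i. \<sigma> (i - 1)" and K = K and L = L, OF _ _ K n])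
    fix i l assume "i \<in> {1..m}" "l < L"
    then show "\<sigma> (i - 1) l < r" using \<sigma>(1) by (force simp: PiE_iff)
  next
    fix i i' assume "1 \<le> i" "i < i'" "i' \<le> m"
    then have "i - 1 < m" "i' - 1 < m" "i - 1 \<noteq> i' - 1" by auto
    then have "\<not> K < card {l. l < L \<and> \<sigma> (i - 1) l = \<sigma> (i' - 1) l}" using \<sigma>(2) by blast
    then show "card {l. l < L \<and> \<sigma> (i - 1) l = \<sigma> (i' - 1) l} \<le> K" by simp
  qed
qed

lemma pow_div_fact_le_exp: "(x::real) \<ge> 0 \<Longrightarrow> x ^ k / fact k \<le> exp x"
proof -
  assume x: "x \<ge> 0"
  have s: "(\<lambda>n. x ^ n /\<^sub>R fact n) sums exp x" by (rule exp_converges)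
  have "(\<Sum>n\<in>{k}. x ^ n /\<^sub>R fact n) \<le> suminf (\<lambda>n. x ^ n /\<^sub>R fact n)"
    by (rule sum_le_suminf) (use s x in \<open>auto simp: sums_iff\<close>)
  then show ?thesis using s by (simp add: sums_iff divide_inverse mult.commute)
qed

lemma pow_div_exp_le_fact: "(real k / exp 1) ^ k \<le> fact k"
proof -
  have "real k ^ k / fact k \<le> exp (real k)" by (rule pow_div_fact_le_exp) simp
  moreover have "exp (real k) = exp 1 ^ k" by (simp add: exp_of_nat_mult[symmetric])
  ultimately show ?thesis by (simp add: power_divide field_simps)
qed

lemma binomial_le_exp_pow: "real (n choose k) \<le> (exp 1 * real n / real k) ^ k"
proof (cases "k = 0")
  case True
  then show ?thesis by simp
next
  case False
  have "real (n choose k) * fact k \<le> real n ^ k"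
    using binomial_fact_pow[of n k] by (metis of_nat_fact of_nat_le_iff of_nat_mult of_nat_power)
  then have "real (n choose k) \<le> real n ^ k / fact k" by (simp add: field_simps)
  also have "\<dots> \<le> real n ^ k / (real k / exp 1) ^ k"
    using pow_div_exp_le_fact[of k] False by (intro divide_left_mono) auto
  also have "\<dots> = (exp 1 * real n / real k) ^ k" by (simp add: power_divide field_simps)
  finally show ?thesis .
qed

lemma g_le_of_code_estimate:
  assumes K: "2 ^ K \<le> r" and n: "n \<le> 2 ^ L"
    and small: "real m * (exp 1 * real L / (real (Suc K) * real r)) ^ Suc K < 1"
  shows "g m n \<le> r"
proof (rule g_le_of_code_count[OF _ K n])
  have r: "0 < r" using K by (metis less_le_trans zero_less_numeral zero_less_power)
  show "m * ((L choose Suc K) * r ^ (L - Suc K)) < r ^ L"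
  proof (cases "L < Suc K")
    case True
    then show ?thesis using r by (simp add: binomial_eq_0)
  next
    case False
    have "real m * real (L choose Suc K) \<le> real m * (exp 1 * real L / real (Suc K)) ^ Suc K"
      by (intro mult_left_mono binomial_le_exp_pow) auto
    also have "\<dots> = real m * (exp 1 * real L / (real (Suc K) * real r)) ^ Suc K * real r ^ Suc K"
      using r by (simp add: power_divide power_mult_distrib)
    also have "\<dots> < real r ^ Suc K"
      using mult_strict_right_mono[OF small, of "real r ^ Suc K"] r by simp
    finally have "m * (L choose Suc K) < r ^ Suc K" by (simp flip: of_nat_mult of_nat_power)
    then have "m * (L choose Suc K) * r ^ (L - Suc K) < r ^ Suc K * r ^ (L - Suc K)"
      using r by simp
    also have "\<dots> = r ^ L" using False by (metis power_add add_diff_inverse_nat)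
    finally show ?thesis by (simp add: mult.assoc)
  qed
qed

lemma log2_less_Suc_floor_log: "0 < r \<Longrightarrow> log 2 (real r) < real (Suc (floor_log r))"
proof -
  assume "0 < r"
  have "real r < 2 ^ Suc (floor_log r)"
    using floor_log_exp2_gt[of r] by (metis of_nat_less_iff of_nat_numeral of_nat_power power_Suc)
  then have "log 2 (real r) < log 2 (2 ^ Suc (floor_log r))"
    using \<open>0 < r\<close> by (subst log_less_cancel_iff) auto
  also have "log 2 ((2::real) ^ Suc (floor_log r)) = real (Suc (floor_log r))"
    by (subst log_nat_power) auto
  finally show ?thesis .
qed

text \<open>With \<open>K = \<lfloor>log r\<rfloor>\<close> and \<open>\<gamma> = e L / (r log r)\<close>, the left-hand side of the hypothesis of
  \<open>g_le_of_code_estimate\<close> is at most \<open>r\<^sup>a \<gamma>\<^bsup>log r\<^esup> = (2\<^sup>a \<gamma>)\<^bsup>log r\<^esup>\<close>.\<close>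
lemma g_le_of_code_length:
  fixes a :: real
  assumes r: "2 \<le> r" and n: "n \<le> 2 ^ L" and m: "real m \<le> real r powr a" and a: "0 \<le> a"
    and small: "2 powr a * (exp 1 * real L / (real r * log 2 (real r))) \<le> 1 / 2"
  shows "g m n \<le> r"
proof (rule g_le_of_code_estimate[OF _ n])
  define K where "K = floor_log r"
  define t where "t = log 2 (real r)"
  define \<gamma> where "\<gamma> = exp 1 * real L / (real r * t)"
  show "2 ^ K \<le> r" unfolding K_def using r by (intro floor_log_exp2_le) auto
  have t: "1 \<le> t" "t < real (Suc K)"
    using r log2_less_Suc_floor_log[of r] unfolding t_def K_def by auto
  have "0 \<le> \<gamma>" "2 powr a * \<gamma> \<le> 1 / 2"
    using small t unfolding \<gamma>_def t_def by auto
  moreover from this have "\<gamma> \<le> 2 powr a * \<gamma>"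
    using ge_one_powr_ge_zero[of 2 a] a by (simp add: mult_le_cancel_right1)
  ultimately have \<gamma>: "0 \<le> \<gamma>" "2 powr a * \<gamma> \<le> 1 / 2" "\<gamma> \<le> 1" by auto
  have r_eq: "real r = 2 powr t" unfolding t_def using r by simp
  have "exp 1 * real L / (real (Suc K) * real r) \<le> \<gamma>"
    unfolding \<gamma>_def using t r by (intro divide_left_mono) (auto simp: mult.commute)
  then have "real m * (exp 1 * real L / (real (Suc K) * real r)) ^ Suc K \<le> real r powr a * \<gamma> ^ Suc K"
    using m by (intro mult_mono power_mono) auto
  also have "\<gamma> ^ Suc K \<le> \<gamma> powr t"
  proof (cases "\<gamma> = 0")
    case False
    then have "\<gamma> ^ Suc K = \<gamma> powr real (Suc K)"
      using \<gamma> by (intro powr_realpow[symmetric]) auto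
    also have "\<dots> \<le> \<gamma> powr t" using \<gamma> t by (intro powr_mono') auto
    finally show ?thesis .
  qed simp
  then have "real r powr a * \<gamma> ^ Suc K \<le> real r powr a * \<gamma> powr t" by (simp add: mult_left_mono)
  also have "real r powr a * \<gamma> powr t = (2 powr a * \<gamma>) powr t"
    using \<gamma> r_eq by (simp add: powr_mult powr_powr mult.commute)
  also have "\<dots> \<le> (1 / 2) powr t" using \<gamma> t by (intro powr_mono2) auto
  also have "\<dots> \<le> (1 / 2) powr 1" using t by (intro powr_mono') auto
  also have "\<dots> < 1" by simp
  finally show "real m * (exp 1 * real L / (real (Suc K) * real r)) ^ Suc K < 1" .
qed

lemma g_le_of_few_columns: "2 ^ L \<le> r \<Longrightarrow> n \<le> 2 ^ L \<Longrightarrow> g m n \<le> r"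
  by (rule g_le_of_code[where \<sigma> = "\<lambda>_ _. 0" and K = L and L = L])
    (auto intro: less_le_trans[of 0 "2 ^ L"])

lemma powr_eq_two_powr_log: "0 < x \<Longrightarrow> x powr y = 2 powr (log 2 x * y)"
  by (simp add: powr_powr[symmetric])

lemma nat_floor_two_powr_le: "x \<le> real L \<Longrightarrow> nat \<lfloor>2 powr x\<rfloor> \<le> 2 ^ L"
proof -
  assume "x \<le> real L"
  then have "2 powr x \<le> 2 ^ L" by (metis powr_mono powr_realpow one_le_numeral zero_less_numeral)
  then have "\<lfloor>2 powr x\<rfloor> \<le> \<lfloor>(2::real) ^ L\<rfloor>" by (rule floor_mono)
  then show ?thesis by (simp add: nat_le_iff)
qed

lemma real_nat_ceiling_bounds: "0 \<le> x \<Longrightarrow> x \<le> real (nat \<lceil>x\<rceil>) \<and> real (nat \<lceil>x\<rceil>) \<le> x + 1"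
  using of_int_ceiling_le_add_one[of x] by linarith

lemma g_le_polynomial_regime_at:
  fixes C :: real
  assumes r: "2 \<le> r" and C: "0 < C"
    and small: "exp 1 / (2 * sqrt C) + sqrt C * exp 1 / (real r * log 2 (real r)) \<le> 1 / 2"
  shows "g (nat \<lfloor>real r powr (log 2 C / 2)\<rfloor>) (nat \<lfloor>real r powr (real r / (2 * C))\<rfloor>) \<le> r"
proof -
  define s where "s = sqrt C"
  define t where "t = log 2 (real r)"
  define L where "L = nat \<lceil>real r / (2 * C) * t\<rceil>"
  have s: "0 < s" "C = s * s" unfolding s_def using C by auto
  have t: "1 \<le> t" unfolding t_def using r by simp
  have L: "real r / (2 * C) * t \<le> real L" "real L \<le> real r / (2 * C) * t + 1"
    unfolding L_def using real_nat_ceiling_bounds[of "real r / (2 * C) * t"] C t by auto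
  show ?thesis
  proof (rule g_le_of_code_length[where L = L and a = "log 2 C / 2", OF r])
    have "real r powr (real r / (2 * C)) = 2 powr (real r / (2 * C) * t)"
      using r powr_eq_two_powr_log[of "real r" "real r / (2 * C)"] unfolding t_def by (simp add: mult.commute)
    then show "nat \<lfloor>real r powr (real r / (2 * C))\<rfloor> \<le> 2 ^ L"
      using nat_floor_two_powr_le[OF L(1)] by simp
    have "0 \<le> sqrt C * exp 1 / (real r * log 2 (real r))" using r C by simp
    then have "exp 1 / (2 * s) \<le> 1 / 2" using small unfolding s_def by linarith
    then have "1 \<le> s" using s(1) exp_ge_add_one_self[of 1] by (simp add: field_simps)
    then have "1 * 1 \<le> C" unfolding s(2) by (intro mult_mono) auto
    then show "0 \<le> log 2 C / 2" by simp
    have "2 powr (log 2 C / 2) = s"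
      using s by (simp add: log_mult powr_add powr_log_cancel add_divide_distrib[symmetric])
    then have "2 powr (log 2 C / 2) * (exp 1 * real L / (real r * t))
        \<le> s * (exp 1 * (real r / (2 * C) * t + 1) / (real r * t))"
      using L t r s by (auto intro: mult_left_mono divide_right_mono)
    also have "\<dots> = exp 1 / (2 * s) + s * exp 1 / (real r * t)"
      using s t r by (simp add: field_simps)
    finally show "2 powr (log 2 C / 2) * (exp 1 * real L / (real r * log 2 (real r))) \<le> 1 / 2"
      using small unfolding t_def s_def by linarith
  qed (simp_all add: floor_le_iff)
qed

lemma g_le_polynomial_regime:
  fixes C :: real
  assumes C: "C > exp 2"
  shows "\<forall>\<^sub>F r in sequentially.
     g (nat \<lfloor>real r powr (log 2 C / 2)\<rfloor>) (nat \<lfloor>real r powr (real r / (2 * C))\<rfloor>) \<le> r"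
proof -
  have C0: "0 < C" using C exp_gt_zero[of 2] by linarith
  have "sqrt (exp 1 * exp 1) < sqrt C" using C by (simp add: mult_exp_exp)
  then have "exp 1 < sqrt C" by simp
  moreover have "0 < sqrt C" using C0 by simp
  ultimately have "exp 1 / (2 * sqrt C) < 1 / 2" by (simp add: field_simps)
  moreover have "(\<lambda>r::nat. 1 / (real r * log 2 (real r))) \<longlonglongrightarrow> 0" by real_asymp
  then have "(\<lambda>r::nat. exp 1 / (2 * sqrt C) + sqrt C * exp 1 * (1 / (real r * log 2 (real r))))
      \<longlonglongrightarrow> exp 1 / (2 * sqrt C)"
    using tendsto_add[OF tendsto_const tendsto_mult[OF tendsto_const]] by fastforce
  ultimately have "\<forall>\<^sub>F r in sequentially.
      exp 1 / (2 * sqrt C) + sqrt C * exp 1 * (1 / (real r * log 2 (real r))) < 1 / 2"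
    by (rule order_tendstoD(2)[rotated])
  then show ?thesis using eventually_ge_at_top[of 2]
    by eventually_elim (rule g_le_polynomial_regime_at; use C0 in simp)
qed

lemma g_le_quasipolynomial_regime_at:
  fixes \<epsilon> :: real
  assumes \<epsilon>: "0 < \<epsilon>" "\<epsilon> < 1" and r: "2 \<le> r" and large: "12 \<le> log 2 (real r)"
  shows "g (nat \<lfloor>2 powr (\<epsilon> * (log 2 (real r))\<^sup>2)\<rfloor>) (nat \<lfloor>2 powr (real r powr (1 - \<epsilon>))\<rfloor>) \<le> r"
proof -
  define t where "t = log 2 (real r)"
  define p where "p = real r powr (1 - \<epsilon>)"
  define L where "L = nat \<lceil>p\<rceil>"
  have t: "12 \<le> t" unfolding t_def by (rule large)
  have p: "1 \<le> p" unfolding p_def using \<epsilon> r by (intro ge_one_powr_ge_zero) auto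
  moreover have "p \<le> real L \<and> real L \<le> p + 1"
    unfolding L_def using p by (intro real_nat_ceiling_bounds) simp
  ultimately have L: "p \<le> real L" "real L \<le> 2 * p" by auto
  have r_powr_\<epsilon>: "2 powr (\<epsilon> * t) = real r powr \<epsilon>"
    using r powr_eq_two_powr_log[of "real r" \<epsilon>] unfolding t_def by (simp add: mult.commute)
  show ?thesis
  proof (rule g_le_of_code_length[where L = L and a = "\<epsilon> * t", OF r])
    show "nat \<lfloor>2 powr (real r powr (1 - \<epsilon>))\<rfloor> \<le> 2 ^ L"
      unfolding p_def[symmetric] using L(1) by (rule nat_floor_two_powr_le)
    have "real r powr (\<epsilon> * t) = 2 powr (\<epsilon> * (log 2 (real r))\<^sup>2)"
      using powr_eq_two_powr_log[of "real r" "\<epsilon> * t"] r unfolding t_def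
      by (simp add: power2_eq_square ac_simps)
    then show "real (nat \<lfloor>2 powr (\<epsilon> * (log 2 (real r))\<^sup>2)\<rfloor>) \<le> real r powr (\<epsilon> * t)"
      by simp
    show "0 \<le> \<epsilon> * t" using \<epsilon> t by simp
    have "real r powr \<epsilon> * p = real r"
      unfolding p_def using r by (simp flip: powr_add)
    then have "real L * real r powr \<epsilon> \<le> 2 * real r"
      using mult_right_mono[OF L(2), of "real r powr \<epsilon>"] by (simp add: algebra_simps)
    then have "2 powr (\<epsilon> * t) * (exp 1 * real L / (real r * t)) \<le> 2 * exp 1 / t"
      using t r unfolding r_powr_\<epsilon> by (simp add: field_simps)
    also have "\<dots> \<le> 1 / 2" using t exp_le by (simp add: field_simps)
    finally show "2 powr (\<epsilon> * t) * (exp 1 * real L / (real r * log 2 (real r))) \<le> 1 / 2"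
      unfolding t_def .
  qed
qed

lemma g_le_quasipolynomial_regime:
  fixes \<epsilon> :: real
  assumes \<epsilon>: "\<epsilon> > 0"
  shows "\<forall>\<^sub>F r in sequentially.
     g (nat \<lfloor>2 powr (\<epsilon> * (log 2 (real r))\<^sup>2)\<rfloor>) (nat \<lfloor>2 powr (real r powr (1 - \<epsilon>))\<rfloor>) \<le> r"
proof -
  have "\<forall>\<^sub>F r in sequentially. 12 \<le> log 2 (real r)" by real_asymp
  then show ?thesis using eventually_ge_at_top[of 2]
  proof eventually_elim
    case (elim r)
    show ?case
    proof (cases "\<epsilon> < 1")
      case True
      then show ?thesis using \<epsilon> elim by (intro g_le_quasipolynomial_regime_at) auto
    next
      case False
      then have "real r powr (1 - \<epsilon>) \<le> real r powr 0" using elim by (intro powr_mono) auto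
      then have "nat \<lfloor>2 powr (real r powr (1 - \<epsilon>))\<rfloor> \<le> 2 ^ 1" using elim by (intro nat_floor_two_powr_le) simp
      then show ?thesis using elim by (intro g_le_of_few_columns[where L = 1]) auto
    qed
  qed
qed

section \<open>Colourings from sparsely agreeing colourings of complete graphs\<close>

definition complete_edges :: "'a set \<Rightarrow> 'a set set" where
  "complete_edges S = {e. e \<subseteq> S \<and> card e = 2}"

lemma finite_complete_edges: "finite S \<Longrightarrow> finite (complete_edges S)"
  unfolding complete_edges_def by (auto intro: finite_subset[of _ "Pow S"])

lemma complete_edges_mono: "S \<subseteq> S' \<Longrightarrow> complete_edges S \<subseteq> complete_edges S'"
  unfolding complete_edges_def by auto

lemma card_complete_edges: "finite S \<Longrightarrow> card (complete_edges S) = card S choose 2"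
  unfolding complete_edges_def by (rule n_subsets)

lemma handshake:
  assumes S: "finite S" and A: "A \<subseteq> complete_edges S"
  shows "(\<Sum>v\<in>S. card {e \<in> A. v \<in> e}) = 2 * card A"
proof -
  have "finite A" using A finite_complete_edges[OF S] finite_subset by blast
  have "(\<Sum>v\<in>S. card {e \<in> A. v \<in> e}) = (\<Sum>v\<in>S. \<Sum>e\<in>{e \<in> A. v \<in> e}. 1)" by simp
  also have "\<dots> = (\<Sum>e\<in>A. \<Sum>v\<in>{v \<in> S. v \<in> e}. 1)" using S \<open>finite A\<close> by (rule sum.swap_restrict)
  also have "\<dots> = (\<Sum>e\<in>A. 2)"
  proof (rule sum.cong[OF refl])
    fix e assume "e \<in> A"
    then have "{v \<in> S. v \<in> e} = e" "card e = 2" using A unfolding complete_edges_def by auto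
    then show "(\<Sum>v\<in>{v \<in> S. v \<in> e}. 1) = (2::nat)" by simp
  qed
  finally show ?thesis by simp
qed

lemma card_complete_edges_at:
  assumes "v \<in> S"
  shows "card {e \<in> complete_edges S. P e \<and> v \<in> e} = card {u \<in> S. u \<noteq> v \<and> P {u, v}}"
proof -
  have "{e \<in> complete_edges S. P e \<and> v \<in> e} = (\<lambda>u. {u, v}) ` {u \<in> S. u \<noteq> v \<and> P {u, v}}"
  proof (intro equalityI subsetI)
    fix e assume e: "e \<in> {e \<in> complete_edges S. P e \<and> v \<in> e}"
    then obtain u where "e = {u, v}" "u \<noteq> v"
      unfolding complete_edges_def by (auto simp: card_2_iff doubleton_eq_iff)
    then show "e \<in> (\<lambda>u. {u, v}) ` {u \<in> S. u \<noteq> v \<and> P {u, v}}"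
      using e unfolding complete_edges_def by auto
  qed (use assms in \<open>auto simp: complete_edges_def\<close>)
  moreover have "inj_on (\<lambda>u. {u, v}) {u \<in> S. u \<noteq> v \<and> P {u, v}}"
    by (auto simp: inj_on_def doubleton_eq_iff)
  ultimately show ?thesis by (simp add: card_image)
qed

lemma card_edges_ge_of_min_degree:
  assumes S: "finite S" and A: "A \<subseteq> complete_edges S"
    and degree: "\<And>v. v \<in> S \<Longrightarrow> r \<le> card {e \<in> A. v \<in> e}"
  shows "(card S * r + 1) div 2 \<le> card A"
proof -
  have "card S * r \<le> (\<Sum>v\<in>S. card {e \<in> A. v \<in> e})"
    using sum_bounded_below[of S r "\<lambda>v. card {e \<in> A. v \<in> e}"] degree by simp
  also have "\<dots> = 2 * card A" using S A by (rule handshake)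
  finally show ?thesis by presburger
qed

lemma colorable_insert_low_degree:
  assumes V: "finite V" "v \<in> V" and irrefl: "\<And>v. \<not> adj v v" and sym: "\<And>u v. adj u v \<Longrightarrow> adj v u"
    and colorable: "colorable r (V - {v}) adj" and degree: "card {u \<in> V. adj u v} < r"
  shows "colorable r V adj"
proof -
  define N where "N = {u \<in> V. adj u v}"
  obtain q where q: "\<forall>u\<in>V - {v}. q u < r" "\<forall>u\<in>V - {v}. \<forall>w\<in>V - {v}. adj u w \<longrightarrow> q u \<noteq> q w"
    using colorable unfolding colorable_def by blast
  have "finite (q ` N)" using V unfolding N_def by simp
  moreover have "card (q ` N) < card {0..<r}"
    using card_image_le[of N q] V degree unfolding N_def by simp
  ultimately have "\<not> {0..<r} \<subseteq> q ` N" by (meson card_mono not_le)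
  then obtain c where c: "c < r" "c \<notin> q ` N" by (meson atLeastLessThan_iff subsetI zero_le)
  have "v \<notin> N" unfolding N_def using irrefl by simp
  have "(q(v := c)) u \<noteq> (q(v := c)) w" if "u \<in> V" "w \<in> V" "adj u w" for u w
  proof (cases "u = v \<or> w = v")
    case True
    then have "w \<in> N \<and> u = v \<or> u \<in> N \<and> w = v" using that sym unfolding N_def by auto
    then show ?thesis using c \<open>v \<notin> N\<close> by (auto simp: image_iff)
  next
    case False
    then show ?thesis using q that by simp
  qed
  moreover have "\<forall>u\<in>V. (q(v := c)) u < r" using q c by simp
  ultimately show ?thesis unfolding colorable_def by blast
qed

lemma colorable_if_degenerate:
  assumes "finite V" and irrefl: "\<And>v. \<not> adj v v" and sym: "\<And>u v. adj u v \<Longrightarrow> adj v u"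
    and degenerate: "\<And>S. S \<subseteq> V \<Longrightarrow> S \<noteq> {} \<Longrightarrow> \<exists>v\<in>S. card {u \<in> S. adj u v} < r"
  shows "colorable r V adj"
  using \<open>finite V\<close> degenerate
proof (induction V rule: finite_psubset_induct)
  case (psubset V)
  show ?case
  proof (cases "V = {}")
    case True
    then show ?thesis unfolding colorable_def by simp
  next
    case False
    then obtain v where v: "v \<in> V" "card {u \<in> V. adj u v} < r" using psubset.prems by blast
    have colorable: "colorable r (V - {v}) adj"
    proof (rule psubset.IH)
      show "V - {v} \<subset> V" using v by auto
    qed (use psubset.prems in blast)
    show ?thesis
      using psubset.hyps v(1) irrefl sym colorable v(2) by (rule colorable_insert_low_degree)
  qed
qed

definition shares_dense_subgraph :: "nat \<Rightarrow> nat \<Rightarrow> (nat set \<Rightarrow> nat) \<Rightarrow> (nat set \<Rightarrow> nat) \<Rightarrow> bool" where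
  "shares_dense_subgraph m r f h \<longleftrightarrow>
     (\<exists>S \<subseteq> {1..m}. S \<noteq> {} \<and> (\<forall>v\<in>S. r \<le> card {u \<in> S. u \<noteq> v \<and> f {u, v} = h {u, v}}))"

definition dense_agreement_bound :: "nat \<Rightarrow> nat \<Rightarrow> nat" where
  "dense_agreement_bound m r = (\<Sum>k\<in>{Suc r..m}.
     (m choose k) * (((k choose 2) choose ((k * r + 1) div 2)) * r ^ ((m choose 2) - (k * r + 1) div 2)))"

text \<open>\<open>(k * r + 1) div 2 = \<lceil>k r / 2\<rceil>\<close> is the least number of edges of a graph on \<open>k\<close> vertices
  with minimum degree \<open>r\<close>.\<close>
definition dense_witnesses :: "nat \<Rightarrow> nat \<Rightarrow> (nat \<times> nat set \<times> nat set set) set" where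
  "dense_witnesses m r = (SIGMA k:{Suc r..m}. SIGMA S:{S. S \<subseteq> {1..m} \<and> card S = k}.
     {T. T \<subseteq> complete_edges S \<and> card T = (k * r + 1) div 2})"

lemma shares_dense_subgraph_commute:
  assumes "shares_dense_subgraph m r f h" shows "shares_dense_subgraph m r h f"
proof -
  have "{u \<in> S. u \<noteq> v \<and> f {u, v} = h {u, v}} = {u \<in> S. u \<noteq> v \<and> h {u, v} = f {u, v}}" for S v
    by auto
  then show ?thesis using assms unfolding shares_dense_subgraph_def by simp
qed

lemma dense_agreement_witness:
  assumes "shares_dense_subgraph m r f h"
  shows "\<exists>(k, S, T)\<in>dense_witnesses m r. \<forall>e\<in>T. h e = f e"
proof -
  obtain S where S: "S \<subseteq> {1..m}" "S \<noteq> {}"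
    and degree: "\<And>v. v \<in> S \<Longrightarrow> r \<le> card {u \<in> S. u \<noteq> v \<and> f {u, v} = h {u, v}}"
    using assms unfolding shares_dense_subgraph_def by blast
  have "finite S" using S(1) finite_subset by blast
  obtain v where "v \<in> S" using S(2) by blast
  have "card {u \<in> S. u \<noteq> v \<and> f {u, v} = h {u, v}} \<le> card (S - {v})"
    using \<open>finite S\<close> by (intro card_mono) auto
  then have "r \<le> card (S - {v})" using degree[OF \<open>v \<in> S\<close>] by linarith
  then have "card S \<in> {Suc r..m}"
    using \<open>v \<in> S\<close> \<open>finite S\<close> card_mono[OF _ S(1)] card_gt_0_iff[of S]
    by (auto simp: card_Diff_singleton)
  define A where "A = {e \<in> complete_edges S. f e = h e}"
  have "(card S * r + 1) div 2 \<le> card A"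
  proof (rule card_edges_ge_of_min_degree[OF \<open>finite S\<close>])
    fix w assume "w \<in> S"
    have "{e \<in> A. w \<in> e} = {e \<in> complete_edges S. f e = h e \<and> w \<in> e}" unfolding A_def by auto
    then show "r \<le> card {e \<in> A. w \<in> e}"
      using degree[of w] card_complete_edges_at[of w S "\<lambda>e. f e = h e"] \<open>w \<in> S\<close> by simp
  qed (simp add: A_def)
  then obtain T where "T \<subseteq> A" "card T = (card S * r + 1) div 2" by (rule obtain_subset_with_card_n)
  then have "(card S, S, T) \<in> dense_witnesses m r" "\<forall>e\<in>T. h e = f e"
    using S(1) \<open>card S \<in> {Suc r..m}\<close> unfolding dense_witnesses_def A_def by auto
  then show ?thesis by blast
qed

lemma finite_dense_witnesses: "finite (dense_witnesses m r)"
  unfolding dense_witnesses_def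
  by (intro finite_SigmaI finite_subsets_of_card finite_complete_edges)
    (auto intro: finite_subset[OF _ finite_atLeastAtMost])

lemma sum_dense_witnesses:
  "(\<Sum>(k, S, T)\<in>dense_witnesses m r. r ^ ((m choose 2) - card T)) = dense_agreement_bound m r"
proof -
  let ?t = "\<lambda>k. (k * r + 1) div 2"
  let ?Ss = "\<lambda>k. {S. S \<subseteq> {1..m} \<and> card S = k}"
  let ?Ts = "\<lambda>k S. {T. T \<subseteq> complete_edges S \<and> card T = ?t k}"
  have fin_Ss: "finite (?Ss k)" for k by (rule finite_subsets_of_card) simp
  have fin_Ts: "finite (?Ts k S)" if "S \<in> ?Ss k" for k S
    using that by (intro finite_subsets_of_card finite_complete_edges) (auto intro: finite_subset)
  have "(\<Sum>(k, S, T)\<in>dense_witnesses m r. r ^ ((m choose 2) - card T))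
      = (\<Sum>k\<in>{Suc r..m}. \<Sum>(S, T)\<in>(SIGMA S:?Ss k. ?Ts k S). r ^ ((m choose 2) - card T))"
    unfolding dense_witnesses_def using fin_Ss fin_Ts
    by (intro sum.Sigma[symmetric]) (auto intro: finite_SigmaI)
  also have "\<dots> = (\<Sum>k\<in>{Suc r..m}. \<Sum>S\<in>?Ss k. \<Sum>T\<in>?Ts k S. r ^ ((m choose 2) - card T))"
    using fin_Ss fin_Ts by (intro sum.cong refl sum.Sigma[symmetric]) auto
  also have "\<dots> = dense_agreement_bound m r"
    unfolding dense_agreement_bound_def
  proof (intro sum.cong refl)
    fix k
    have "(\<Sum>S\<in>?Ss k. \<Sum>T\<in>?Ts k S. r ^ ((m choose 2) - card T))
        = (\<Sum>S\<in>?Ss k. ((k choose 2) choose ?t k) * r ^ ((m choose 2) - ?t k))"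
    proof (rule sum.cong[OF refl])
      fix S assume "S \<in> ?Ss k"
      then show "(\<Sum>T\<in>?Ts k S. r ^ ((m choose 2) - card T)) = ((k choose 2) choose ?t k) * r ^ ((m choose 2) - ?t k)"
        using finite_subset[of S "{1..m}"] n_subsets[of "complete_edges S" "?t k"]
        by (simp add: card_complete_edges finite_complete_edges)
    qed
    then show "(\<Sum>S\<in>?Ss k. \<Sum>T\<in>?Ts k S. r ^ ((m choose 2) - card T)) =
        (m choose k) * (((k choose 2) choose ?t k) * r ^ ((m choose 2) - ?t k))"
      using n_subsets[of "{1..m}" k] by simp
  qed
  finally show ?thesis .
qed

lemma card_sharing_dense_subgraph_le:
  assumes f: "f \<in> PiE (complete_edges {1..m}) (\<lambda>_. {0..<r})"
  shows "card {h \<in> PiE (complete_edges {1..m}) (\<lambda>_. {0..<r}). shares_dense_subgraph m r f h}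
    \<le> dense_agreement_bound m r"
proof -
  let ?D = "complete_edges {1..m::nat}"
  let ?U = "PiE ?D (\<lambda>_. {0..<r})"
  let ?agree = "\<lambda>h x. \<forall>e\<in>snd (snd x). h e = f e"
  have "{h \<in> ?U. shares_dense_subgraph m r f h} \<subseteq> {h \<in> ?U. \<exists>x\<in>dense_witnesses m r. ?agree h x}"
  proof (intro subsetI)
    fix h assume "h \<in> {h \<in> ?U. shares_dense_subgraph m r f h}"
    then show "h \<in> {h \<in> ?U. \<exists>x\<in>dense_witnesses m r. ?agree h x}"
      using dense_agreement_witness[of m r f h] by (auto simp: case_prod_beta)
  qed
  then have "card {h \<in> ?U. shares_dense_subgraph m r f h} \<le> card {h \<in> ?U. \<exists>x\<in>dense_witnesses m r. ?agree h x}"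
    by (intro card_mono) (auto simp: finite_PiE finite_complete_edges)
  also have "\<dots> \<le> (\<Sum>x\<in>dense_witnesses m r. r ^ (card ?D - card (snd (snd x))))"
  proof (rule card_PiE_agreeing_somewhere[OF finite_complete_edges finite_dense_witnesses _ f])
    fix x assume "x \<in> dense_witnesses m r"
    then obtain k S T where "x = (k, S, T)" "S \<subseteq> {1..m}" "T \<subseteq> complete_edges S"
      unfolding dense_witnesses_def by auto
    then show "snd (snd x) \<subseteq> ?D" using complete_edges_mono[of S "{1..m}"] by auto
  qed simp
  also have "\<dots> = dense_agreement_bound m r"
    using sum_dense_witnesses[where m = m and r = r] by (simp add: card_complete_edges split_def)
  finally show ?thesis .
qed

lemma g_le_of_dense_agreement_bound:
  assumes count: "n * dense_agreement_bound m r < r ^ (m choose 2)"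
  shows "g m n \<le> r"
proof -
  let ?D = "complete_edges {1..m::nat}"
  let ?U = "PiE ?D (\<lambda>_. {0..<r})"
  have fin: "finite ?U" by (simp add: finite_PiE finite_complete_edges)
  have "n * dense_agreement_bound m r < card ?U"
    using count by (simp add: card_PiE finite_complete_edges card_complete_edges)
  then obtain \<sigma> where \<sigma>: "\<forall>j<n. \<sigma> j \<in> ?U"
    "\<forall>j<n. \<forall>j'<n. j \<noteq> j' \<longrightarrow> \<not> shares_dense_subgraph m r (\<sigma> j) (\<sigma> j')"
    using greedy_pairwise_good[where U = ?U and bad = "shares_dense_subgraph m r",
        OF fin shares_dense_subgraph_commute card_sharing_dense_subgraph_le]
    by blast
  show ?thesis
  proof (rule g_le_of_column_colors[where Y = "\<lambda>j i i'. \<sigma> (j - 1) {i, i'}"])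
    fix j i i' assume "j \<in> {1..n}" "1 \<le> i" "i < i'" "i' \<le> m"
    then have "j - 1 < n" "{i, i'} \<in> ?D" by (auto simp: complete_edges_def)
    then have "\<sigma> (j - 1) \<in> ?U" "{i, i'} \<in> ?D" using \<sigma>(1) by blast+
    then show "\<sigma> (j - 1) {i, i'} < r" using PiE_mem by fastforce
  next
    fix j j' assume "1 \<le> j" "j < j'" "j' \<le> n"
    then have sparse: "\<not> shares_dense_subgraph m r (\<sigma> (j - 1)) (\<sigma> (j' - 1))" using \<sigma>(2) by simp
    have "colorable r {1..m} (\<lambda>u v. u \<noteq> v \<and> \<sigma> (j - 1) {u, v} = \<sigma> (j' - 1) {u, v})"
    proof (rule colorable_if_degenerate)
      fix S assume "S \<subseteq> {1..m}" "S \<noteq> {}"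
      then show "\<exists>v\<in>S. card {u \<in> S. u \<noteq> v \<and> \<sigma> (j - 1) {u, v} = \<sigma> (j' - 1) {u, v}} < r"
        using sparse unfolding shares_dense_subgraph_def by (meson not_le)
    qed (auto simp: insert_commute)
    then show "colorable r {1..m} (\<lambda>i i'. i < i' \<and> \<sigma> (j - 1) {i, i'} = \<sigma> (j' - 1) {i, i'})"
      by (rule colorable_mono) simp
  qed
qed

section \<open>Estimates for the quadratic regime\<close>

text \<open>An upper bound for the logarithm of the \<open>k\<close>-th summand of \<open>dense_agreement_bound m r\<close>
  divided by \<open>r\<^bsup>m choose 2\<^esup>\<close>, valid for \<open>m \<le> e\<^sup>-\<^sup>4 r\<^sup>2\<close>.\<close>
definition dense_term_exponent :: "real \<Rightarrow> real \<Rightarrow> real" where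
  "dense_term_exponent r k = k * (ln r - 3) - k * r / 2 * ln (r\<^sup>2 / (exp 1 * k))"

lemma binomial_vertex_sets_le:
  fixes r m k :: nat
  assumes r: "0 < r" and k: "r + 1 \<le> k" and m: "real m \<le> exp (-4) * (real r)\<^sup>2"
  shows "real (m choose k) \<le> exp (real k * (ln (real r) - 3))"
proof -
  have r: "0 < real r" "0 < real k" using r k by auto
  have "exp 1 * real m \<le> exp 1 * (exp (-4) * (real r)\<^sup>2)" using m by simp
  also have "\<dots> = exp (-3) * real r * real r"
    using mult_exp_exp[of 1 "-4 :: real"] by (simp add: power2_eq_square algebra_simps)
  also have "\<dots> \<le> exp (-3) * real r * real k" using k by (intro mult_left_mono) auto
  finally have "exp 1 * real m / real k \<le> exp (-3) * real r" using r by (simp add: field_simps)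
  then have "real (m choose k) \<le> (exp (-3) * real r) ^ k"
    using binomial_le_exp_pow[of m k] by (meson order_trans power_mono divide_nonneg_nonneg
        mult_nonneg_nonneg exp_ge_zero of_nat_0_le_iff)
  also have "\<dots> = exp (ln (real r) + (-3)) ^ k" using r by (simp only: exp_add exp_ln mult.commute)
  also have "\<dots> = exp (real k * (ln (real r) - 3))" by (simp add: exp_of_nat_mult)
  finally show ?thesis .
qed

lemma binomial_edge_sets_div_le:
  fixes r k t :: nat
  assumes t: "real k * real r / 2 \<le> real t" and k: "0 < k" "exp 1 * real k \<le> (real r)\<^sup>2"
  shows "real ((k choose 2) choose t) / real r ^ t \<le> exp (- (real k * real r / 2 * ln ((real r)\<^sup>2 / (exp 1 * real k))))"
proof -
  define y where "y = exp 1 * real k / (real r)\<^sup>2"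
  have "0 < exp 1 * real k" using k by simp
  then have "0 < (real r)\<^sup>2" using k by linarith
  then have r: "0 < real r" by simp
  have y: "0 < y" "y \<le> 1" unfolding y_def using k r by auto
  have "0 < real k * real r / 2" using k r by simp
  then have "0 < t" using t by linarith
  have "2 * (k choose 2) \<le> k * (k - 1)" by (simp add: choose_two)
  also have "\<dots> \<le> k * k" by simp
  finally have "2 * (k choose 2) \<le> k * k" .
  then have "real (k choose 2) \<le> (real k)\<^sup>2 / 2"
    by (simp add: power2_eq_square flip: of_nat_mult of_nat_le_iff)
  then have "exp 1 * real (k choose 2) / (real t * real r) \<le> exp 1 * ((real k)\<^sup>2 / 2) / (real k * real r / 2 * real r)"
    using t r k \<open>0 < t\<close> by (intro frac_le mult_right_mono) auto
  also have "\<dots> = y" unfolding y_def using r k by (simp add: field_simps power2_eq_square)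
  finally have base: "exp 1 * real (k choose 2) / (real t * real r) \<le> y" .
  have "real ((k choose 2) choose t) / real r ^ t \<le> (exp 1 * real (k choose 2) / real t) ^ t / real r ^ t"
    by (intro divide_right_mono binomial_le_exp_pow) auto
  also have "\<dots> = (exp 1 * real (k choose 2) / (real t * real r)) ^ t"
    by (simp add: power_divide power_mult_distrib)
  also have "\<dots> \<le> y ^ t" using base by (intro power_mono) auto
  also have "\<dots> = y powr real t" using y by (simp add: powr_realpow)
  also have "\<dots> \<le> y powr (real k * real r / 2)" using y t by (intro powr_mono') auto
  also have "\<dots> = exp (- (real k * real r / 2 * ln ((real r)\<^sup>2 / (exp 1 * real k))))"
    using y r k unfolding y_def by (simp add: powr_def ln_div algebra_simps)
  finally show ?thesis .
qed

lemma dense_term_le: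
  fixes r m k :: nat
  assumes r: "0 < r" and k: "r + 1 \<le> k" "k \<le> m" and m: "real m \<le> exp (-4) * (real r)\<^sup>2"
  shows "real ((m choose k) * (((k choose 2) choose ((k * r + 1) div 2)) * r ^ ((m choose 2) - (k * r + 1) div 2)))
    \<le> real r ^ (m choose 2) * exp (dense_term_exponent (real r) (real k))"
proof -
  define t where "t = (k * r + 1) div 2"
  show ?thesis
  proof (cases "t \<le> k choose 2")
    case False
    then show ?thesis unfolding t_def[symmetric] by (simp add: binomial_eq_0)
  next
    case True
    have "k choose 2 \<le> m choose 2" using k(2) by (rule binomial_right_mono)
    with True have pow: "real r ^ ((m choose 2) - t) = real r ^ (m choose 2) / real r ^ t"
      using r by (simp add: power_diff)
    have "exp 1 * real k \<le> exp 1 * (exp (-4) * (real r)\<^sup>2)" using k m by simp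
    also have "\<dots> = exp (-3) * (real r)\<^sup>2" using mult_exp_exp[of 1 "-4 :: real"] by simp
    also have "\<dots> \<le> (real r)\<^sup>2" using mult_right_mono[of "exp (-3)" 1 "(real r)\<^sup>2"] by simp
    finally have ek: "exp 1 * real k \<le> (real r)\<^sup>2" .
    have "real ((k choose 2) choose t) / real r ^ t
        \<le> exp (- (real k * real r / 2 * ln ((real r)\<^sup>2 / (exp 1 * real k))))"
    proof (rule binomial_edge_sets_div_le[OF _ _ ek])
      have "k * r \<le> 2 * t" unfolding t_def by presburger
      then show "real k * real r / 2 \<le> real t" by (simp flip: of_nat_mult of_nat_le_iff)
    qed (use k in auto)
    then have "real (m choose k) * (real ((k choose 2) choose t) / real r ^ t)
        \<le> exp (real k * (ln (real r) - 3)) * exp (- (real k * real r / 2 * ln ((real r)\<^sup>2 / (exp 1 * real k))))"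
      using binomial_vertex_sets_le[OF r k(1) m] by (intro mult_mono) auto
    also have "\<dots> = exp (dense_term_exponent (real r) (real k))"
      unfolding dense_term_exponent_def by (simp add: mult_exp_exp)
    finally have "real r ^ (m choose 2) * (real (m choose k) * (real ((k choose 2) choose t) / real r ^ t))
        \<le> real r ^ (m choose 2) * exp (dense_term_exponent (real r) (real k))"
      by (rule mult_left_mono) simp
    then show ?thesis
      unfolding t_def[symmetric] using pow by (simp add: algebra_simps)
  qed
qed

lemma dense_term_exponent_mono:
  fixes r k :: real
  assumes r: "1 \<le> r" and k: "r + 1 \<le> k" and ratio: "3 \<le> ln (r\<^sup>2 / (exp 1 * k))"
  shows "dense_term_exponent r k \<le> dense_term_exponent r (r + 1)"
proof -
  define a where "a = ln (r\<^sup>2 / (exp 1 * (r + 1)))"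
  define l where "l = ln (r\<^sup>2 / (exp 1 * k))"
  define d where "d = ln (k / (r + 1))"
  have pos: "0 < r" "0 < k" using r k by auto
  have "l = a - d" unfolding l_def a_def d_def using pos by (simp add: ln_div ln_mult)
  moreover have "(r + 1) * d \<le> k - (r + 1)"
    using ln_le_minus_one[of "k / (r + 1)"] pos unfolding d_def by (simp add: field_simps)
  moreover have "3 * (k - (r + 1)) \<le> l * (k - (r + 1))"
    using ratio k unfolding l_def by (intro mult_right_mono) auto
  ultimately have "2 * (k - (r + 1)) \<le> (k - (r + 1)) * l - (r + 1) * d" by (simp add: algebra_simps)
  also have "\<dots> = k * l - (r + 1) * (l + d)" by (simp add: algebra_simps)
  also have "l + d = a" using \<open>l = a - d\<close> by simp
  finally have "2 * (k - (r + 1)) \<le> k * l - (r + 1) * a" .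
  then have "(k - (r + 1)) * r \<le> r / 2 * (k * l - (r + 1) * a)" using pos by simp
  moreover have "(k - (r + 1)) * (ln r - 3) \<le> (k - (r + 1)) * r"
    using ln_le_minus_one[of r] pos k by (intro mult_left_mono) auto
  moreover have "dense_term_exponent r (r + 1) - dense_term_exponent r k
      = r / 2 * (k * l - (r + 1) * a) - (k - (r + 1)) * (ln r - 3)"
    unfolding dense_term_exponent_def l_def a_def by (simp add: algebra_simps)
  ultimately show ?thesis by linarith
qed

lemma dense_agreement_bound_le:
  assumes r: "1 \<le> r" and m: "real m \<le> exp (-4) * (real r)\<^sup>2"
  shows "real (dense_agreement_bound m r)
    \<le> real m * (real r ^ (m choose 2) * exp (dense_term_exponent (real r) (real r + 1)))"
proof -
  have "real (dense_agreement_bound m r) \<le> (\<Sum>k\<in>{Suc r..m}. real r ^ (m choose 2) * exp (dense_term_exponent (real r) (real r + 1)))"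
    unfolding dense_agreement_bound_def of_nat_sum
  proof (rule sum_mono)
    fix k assume k: "k \<in> {Suc r..m}"
    have "exp 4 * real k \<le> exp 4 * (exp (-4) * (real r)\<^sup>2)" using k m by (intro mult_left_mono) auto
    also have "\<dots> = (real r)\<^sup>2" by (simp add: exp_minus)
    also have "exp 4 * real k = exp 3 * (exp 1 * real k)" by (simp add: mult.assoc[symmetric] mult_exp_exp)
    finally have "exp 3 \<le> (real r)\<^sup>2 / (exp 1 * real k)"
      using k by (simp add: pos_le_divide_eq)
    then have "3 \<le> ln ((real r)\<^sup>2 / (exp 1 * real k))" using k r by (simp add: ln_ge_iff)
    then have "dense_term_exponent (real r) (real k) \<le> dense_term_exponent (real r) (real r + 1)"
      using k r by (intro dense_term_exponent_mono) auto
    then show "real ((m choose k) * (((k choose 2) choose ((k * r + 1) div 2)) * r ^ ((m choose 2) - (k * r + 1) div 2)))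
        \<le> real r ^ (m choose 2) * exp (dense_term_exponent (real r) (real r + 1))"
      using dense_term_le[of r k m] k r m by (auto intro: order_trans)
  qed
  also have "\<dots> \<le> real m * (real r ^ (m choose 2) * exp (dense_term_exponent (real r) (real r + 1)))"
    by (simp add: mult_right_mono)
  finally show ?thesis .
qed

lemma quadratic_regime_exponent_negative:
  "\<forall>\<^sub>F r in sequentially. (real r)\<^sup>2 / 2 * ln (real r) - (real r)\<^sup>2 + 2 * ln (real r) - 4
     + dense_term_exponent (real r) (real r + 1) < 0"
proof -
  have "\<forall>\<^sub>F r in sequentially. (real r)\<^sup>2 / 2 * ln (real r) - (real r)\<^sup>2 + 2 * ln (real r) - 4
     + ((real r + 1) * (ln (real r) - 3) - (real r + 1) * real r / 2 * (2 * ln (real r) - (1 + ln (real r + 1)))) < 0"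
    by real_asymp
  then show ?thesis using eventually_gt_at_top[of 0]
    by eventually_elim (simp add: dense_term_exponent_def ln_div ln_mult ln_realpow)
qed

lemma g_le_quadratic_regime:
  "\<forall>\<^sub>F r in sequentially.
     g (nat \<lfloor>exp (-4) * (real r)\<^sup>2\<rfloor>) (nat \<lfloor>real r powr ((real r)\<^sup>2 / 2) / exp ((real r)\<^sup>2)\<rfloor>) \<le> r"
  using quadratic_regime_exponent_negative eventually_ge_at_top[of 1]
proof eventually_elim
  case (elim r)
  define m where "m = nat \<lfloor>exp (-4) * (real r)\<^sup>2\<rfloor>"
  define n where "n = nat \<lfloor>real r powr ((real r)\<^sup>2 / 2) / exp ((real r)\<^sup>2)\<rfloor>"
  define E where "E = exp (dense_term_exponent (real r) (real r + 1))"
  have m: "real m \<le> exp (-4) * (real r)\<^sup>2" unfolding m_def by simp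
  have n: "real n \<le> real r powr ((real r)\<^sup>2 / 2) / exp ((real r)\<^sup>2)" unfolding n_def by simp
  have "real n * real m \<le> real r powr ((real r)\<^sup>2 / 2) / exp ((real r)\<^sup>2) * (exp (-4) * (real r)\<^sup>2)"
    using m n by (intro mult_mono) auto
  also have "\<dots> = exp ((real r)\<^sup>2 / 2 * ln (real r)) / exp ((real r)\<^sup>2) * exp (2 * ln (real r)) / exp 4"
    using elim by (simp add: powr_def exp_minus exp_double field_simps)
  also have "\<dots> = exp ((real r)\<^sup>2 / 2 * ln (real r) - (real r)\<^sup>2 + 2 * ln (real r) - 4)"
    by (simp only: exp_add exp_diff)
  finally have "real n * real m * E \<le> exp ((real r)\<^sup>2 / 2 * ln (real r) - (real r)\<^sup>2 + 2 * ln (real r) - 4) * E"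
    unfolding E_def by (rule mult_right_mono) simp
  also have "\<dots> < 1" using elim unfolding E_def by (simp add: mult_exp_exp)
  finally have small: "real n * real m * E < 1" .
  have "real (n * dense_agreement_bound m r) \<le> real n * (real m * (real r ^ (m choose 2) * E))"
    unfolding E_def using dense_agreement_bound_le[OF elim(2) m] by (simp add: mult_left_mono)
  also have "\<dots> = real r ^ (m choose 2) * (real n * real m * E)" by simp
  also have "\<dots> < real r ^ (m choose 2)" using small elim by simp
  finally have "n * dense_agreement_bound m r < r ^ (m choose 2)"
    by (simp only: of_nat_power[symmetric] of_nat_less_iff)
  then show ?case unfolding m_def n_def by (rule g_le_of_dense_agreement_bound)
qed

theorem theorem1p3:
  shows "(\<forall>C::real. C > exp 2 \<longrightarrow>
            (\<forall>\<^sub>F r in sequentially.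
               g (nat \<lfloor>real r powr (log 2 C / 2)\<rfloor>) (nat \<lfloor>real r powr (real r / (2 * C))\<rfloor>) \<le> r))
       \<and> (\<forall>\<epsilon>::real. \<epsilon> > 0 \<longrightarrow>
            (\<forall>\<^sub>F r in sequentially.
               g (nat \<lfloor>2 powr (\<epsilon> * (log 2 (real r))\<^sup>2)\<rfloor>) (nat \<lfloor>2 powr (real r powr (1 - \<epsilon>))\<rfloor>) \<le> r))
       \<and> (\<exists>c::real. c > 0 \<and>
            (\<forall>\<^sub>F r in sequentially.
               g (nat \<lfloor>c * (real r)\<^sup>2\<rfloor>) (nat \<lfloor>real r powr ((real r)\<^sup>2 / 2) / exp ((real r)\<^sup>2)\<rfloor>) \<le> r))"
  using g_le_polynomial_regime g_le_quasipolynomial_regime g_le_quadratic_regime exp_gt_zero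
  by blast

end
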